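(* Let $S$ be a compact Hausdorff topological Clifford semigroup satisfying: (B1) $E(S)$, with the subspace topology, is a metrizable perfect semilattice; (B2) each maximal subgroup $G_e$ is compact metrizable; (B3) the functor $e\mapsto G_e$ is inverse-limit preserving. Let $d$ be the function on $S\times S$ constructed below. Then $d$ is a metric on $S$ inducing the topology of $S$ (which coincides with the Bowman topology). In particular $S$ is metrizable.
   Context: A Clifford semigroup is an inverse semigroup (each $x$ has a unique $x^{-1}$ with $xx^{-1}x=x$, $x^{-1}xx^{-1}=x^{-1}$) with $xx^{-1}=x^{-1}x$ for all $x$; a topological Clifford semigroup has continuous multiplication and inversion. $E(S)$ is the set of idempotents, a semilattice ordered by $e\le f\iff ef=e$ (so $ef=\inf\{e,f\}$). $G_e:=\{x: xx^{-1}=e\}$ (subspace topology), $S=\bigsqcup_e G_e$, and we write elements of $S$ as pairs $(e,g)$ with $g\in G_e$. For $e\le f$, $\varphi_{f,e}\colon G_f\to G_e$, $x\mapsto ex$. Way-below: in a poset, $x\ll y$ if for every nonempty up-directed $D$ whose supremum exists with $y\le\sup D$, there is $d\in D$ with $x\le d$; $x\ll y$ implies $x\le y$. A perfect semilattice is a compact Hausdorff topological semilattice in which every point has a neighbourhood basis of open subsemilattices. It is known that a perfect semilattice is a complete continuous semilattice (every $x$ is the supremum of $\{y: y\ll x\}$, which is directed) whose topology is its Lawson topology; in particular each set $\twoheaduparrow b:=\{e: b\ll e\}$ is open, and $E(S)$ has a minimum $0$. A (domain) basis of $E(S)$ is a subset $\mathcal B$ such that for every $x$, $\{b\in\mathcal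 B: b\ll x\}$ is up-directed with supremum $x$; under (B1) $E(S)$ admits a countable basis. The functor $e\mapsto G_e$ is inverse-limit preserving if for every nonempty up-directed $D\subseteq E(S)$ with $e=\sup D$, the map $G_e\to\varprojlim_{b\in D}G_b$, $g\mapsto(\varphi_{e,b}(g))_{b\in D}$, is an isomorphism of topological groups. Construction of $d$: fix a compatible metric $\rho\le 1$ on $E(S)$ and a countable basis $\mathcal B=\{b_j\}_{j\ge1}$ of $E(S)$. For each $b\in\mathcal B$ choose a compatible metric $d_b\le1$ on $G_b$, a point $c_b\in G_b$, and a dense sequence $\{t_{b,k}\}_{k\ge1}$ in $G_b$. For $b\ne 0$ let $a_b(e):=\rho(e,E(S)\setminus\twoheaduparrow b)$ (distance to a set), and let $a_0\equiv1$. Let $\widehat\varphi_{e,b}\colon G_e\to G_b$ be $\varphi_{e,b}$ if $b\le e$ and the constant map with value $c_b$ otherwise. Put $P_b((e,g),(f,h)) := |a_b(e)-a_b(f)| + \sum_{k\ge1}2^{-k}\bigl|a_b(e)\,d_b(\widehat\varphi_{e,b}(g),t_{b,k}) - a_b(f)\,d_b(\widehat\varphi_{f,b}(h),t_{b,k})\bigr|$ and $d((e,g),(f,h)) := \rho(e,f)+\sum_{j\ge1}2^{-j}P_{b_j}((e,g),(f,h))$. *)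

theory Defs
  imports "HOL-Analysis.Analysis"
begin

definition clifford_semigroup :: "('a \<Rightarrow> 'a \<Rightarrow> 'a) \<Rightarrow> ('a \<Rightarrow> 'a) \<Rightarrow> bool" where
  "clifford_semigroup mul iv \<longleftrightarrow>
     (\<forall>x y z. mul (mul x y) z = mul x (mul y z)) \<and>
     (\<forall>x y. (mul (mul x y) x = x \<and> mul (mul y x) y = y) \<longleftrightarrow> y = iv x) \<and>
     (\<forall>x. mul x (iv x) = mul (iv x) x)"

definition topological_clifford_semigroup ::
  "('a::topological_space \<Rightarrow> 'a \<Rightarrow> 'a) \<Rightarrow> ('a \<Rightarrow> 'a) \<Rightarrow> bool" where
  "topological_clifford_semigroup mul iv \<longleftrightarrow>
     clifford_semigroup mul iv \<and>
     continuous_on UNIV (\<lambda>p. mul (fst p) (snd p)) \<and> continuous_on UNIV iv"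

definition idems :: "('a \<Rightarrow> 'a \<Rightarrow> 'a) \<Rightarrow> 'a set" where
  "idems mul = {e. mul e e = e}"

definition sle :: "('a \<Rightarrow> 'a \<Rightarrow> 'a) \<Rightarrow> 'a \<Rightarrow> 'a \<Rightarrow> bool" where
  "sle mul e f \<longleftrightarrow> mul e f = e"

definition Grp :: "('a \<Rightarrow> 'a \<Rightarrow> 'a) \<Rightarrow> ('a \<Rightarrow> 'a) \<Rightarrow> 'a \<Rightarrow> 'a set" where
  "Grp mul iv e = {x. mul x (iv x) = e}"

definition updirected :: "'a set \<Rightarrow> ('a \<Rightarrow> 'a \<Rightarrow> bool) \<Rightarrow> 'a set \<Rightarrow> bool" where
  "updirected E le D \<longleftrightarrow> D \<noteq> {} \<and> D \<subseteq> E \<and>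
     (\<forall>a\<in>D. \<forall>b\<in>D. \<exists>c\<in>D. le a c \<and> le b c)"

definition is_sup :: "'a set \<Rightarrow> ('a \<Rightarrow> 'a \<Rightarrow> bool) \<Rightarrow> 'a set \<Rightarrow> 'a \<Rightarrow> bool" where
  "is_sup E le D s \<longleftrightarrow> s \<in> E \<and> (\<forall>d\<in>D. le d s) \<and>
     (\<forall>u\<in>E. (\<forall>d\<in>D. le d u) \<longrightarrow> le s u)"

definition way_below :: "'a set \<Rightarrow> ('a \<Rightarrow> 'a \<Rightarrow> bool) \<Rightarrow> 'a \<Rightarrow> 'a \<Rightarrow> bool" where
  "way_below E le x y \<longleftrightarrow>
     (\<forall>D s. updirected E le D \<and> is_sup E le D s \<and> le y s \<longrightarrow> (\<exists>d\<in>D. le x d))"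

definition wb_up :: "'a set \<Rightarrow> ('a \<Rightarrow> 'a \<Rightarrow> bool) \<Rightarrow> 'a \<Rightarrow> 'a set" where
  "wb_up E le b = {e \<in> E. way_below E le b e}"

definition domain_basis :: "'a set \<Rightarrow> ('a \<Rightarrow> 'a \<Rightarrow> bool) \<Rightarrow> 'a set \<Rightarrow> bool" where
  "domain_basis E le B \<longleftrightarrow> B \<subseteq> E \<and>
     (\<forall>x\<in>E. updirected E le {b\<in>B. way_below E le b x} \<and>
             is_sup E le {b\<in>B. way_below E le b x} x)"

definition perfect_semilattice :: "('a::topological_space \<Rightarrow> 'a \<Rightarrow> 'a) \<Rightarrow> 'a set \<Rightarrow> bool" where
  "perfect_semilattice mul E \<longleftrightarrow>
     (\<forall>x\<in>E. mul x x = x) \<and> (\<forall>x\<in>E. \<forall>y\<in>E. mul x y \<in> E \<and> mul x y = mul y x) \<and>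
     (\<forall>x\<in>E. \<forall>y\<in>E. \<forall>z\<in>E. mul (mul x y) z = mul x (mul y z)) \<and>
     compactin euclidean E \<and> Hausdorff_space (subtopology euclidean E) \<and>
     continuous_map (prod_topology (subtopology euclidean E) (subtopology euclidean E))
        (subtopology euclidean E) (\<lambda>p. mul (fst p) (snd p)) \<and>
     (\<forall>x\<in>E. \<forall>U. openin (subtopology euclidean E) U \<and> x \<in> U \<longrightarrow>
        (\<exists>V. openin (subtopology euclidean E) V \<and> x \<in> V \<and> V \<subseteq> U \<and>
             (\<forall>a\<in>V. \<forall>b\<in>V. mul a b \<in> V)))"

text \<open>The inverse limit of the groups G_b (b in D) along the maps phi, as a subspace of the
  product space (extensional functions on D).\<close>

definition inv_limit :: "('a \<Rightarrow> 'a \<Rightarrow> 'a) \<Rightarrow> ('a \<Rightarrow> 'a) \<Rightarrow> 'a set \<Rightarrow> ('a \<Rightarrow> 'a) set" where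
  "inv_limit mul iv D = {h. h \<in> (\<Pi>\<^sub>E b\<in>D. Grp mul iv b) \<and>
      (\<forall>b\<in>D. \<forall>b'\<in>D. sle mul b b' \<longrightarrow> mul b (h b') = h b)}"

definition inverse_limit_preserving ::
  "('a::topological_space \<Rightarrow> 'a \<Rightarrow> 'a) \<Rightarrow> ('a \<Rightarrow> 'a) \<Rightarrow> bool" where
  "inverse_limit_preserving mul iv \<longleftrightarrow>
     (\<forall>D e. updirected (idems mul) (sle mul) D \<and> is_sup (idems mul) (sle mul) D e \<longrightarrow>
        (let f = (\<lambda>g. \<lambda>b\<in>D. mul b g) in
          (\<forall>g\<in>Grp mul iv e. \<forall>h\<in>Grp mul iv e. f (mul g h) = (\<lambda>b\<in>D. mul (f g b) (f h b))) \<and>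
          homeomorphic_map (subtopology euclidean (Grp mul iv e))
            (subtopology (product_topology (\<lambda>_. euclidean) D) (inv_limit mul iv D)) f))"

definition restr_metric :: "'a set \<Rightarrow> ('a \<Rightarrow> 'a \<Rightarrow> real) \<Rightarrow> 'a \<Rightarrow> 'a \<Rightarrow> real" where
  "restr_metric M d x y = (if x \<in> M \<and> y \<in> M then d x y else 0)"

text \<open>d is a metric on M (only its values on M matter) inducing the topology X.\<close>
definition compatible_metric :: "'a set \<Rightarrow> ('a \<Rightarrow> 'a \<Rightarrow> real) \<Rightarrow> 'a topology \<Rightarrow> bool" where
  "compatible_metric M d X \<longleftrightarrow> Metric_space M (restr_metric M d) \<and>
     Metric_space.mtopology M (restr_metric M d) = X"

definition a_fun :: "('a \<Rightarrow> 'a \<Rightarrow> 'a) \<Rightarrow> ('a \<Rightarrow> 'a \<Rightarrow> real) \<Rightarrow> 'a \<Rightarrow> 'a \<Rightarrow> real" where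
  "a_fun mul rho b e =
     (let E = idems mul in
      if (\<forall>x\<in>E. sle mul b x) then 1
      else Inf (rho e ` (E - wb_up E (sle mul) b)))"

definition phihat :: "('a \<Rightarrow> 'a \<Rightarrow> 'a) \<Rightarrow> ('a \<Rightarrow> 'a) \<Rightarrow> 'a \<Rightarrow> 'a \<Rightarrow> 'a \<Rightarrow> 'a" where
  "phihat mul c e b g = (if sle mul b e then mul b g else c b)"

definition P_fun :: "('a \<Rightarrow> 'a \<Rightarrow> 'a) \<Rightarrow> ('a \<Rightarrow> 'a) \<Rightarrow> ('a \<Rightarrow> 'a \<Rightarrow> real) \<Rightarrow>
    ('a \<Rightarrow> 'a \<Rightarrow> 'a \<Rightarrow> real) \<Rightarrow> ('a \<Rightarrow> 'a) \<Rightarrow> ('a \<Rightarrow> nat \<Rightarrow> 'a) \<Rightarrow> 'a \<Rightarrow> 'a \<Rightarrow> 'a \<Rightarrow> real" where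
  "P_fun mul iv rho db c t b g h =
     (let e = mul g (iv g); f = mul h (iv h); a = a_fun mul rho b in
      \<bar>a e - a f\<bar> +
      (\<Sum>k. (1/2) ^ Suc k *
         \<bar>a e * db b (phihat mul c e b g) (t b (Suc k)) -
          a f * db b (phihat mul c f b h) (t b (Suc k))\<bar>))"

text \<open>The basis is given as an enumeration bs 1, bs 2, ...; bs 0 is unused.\<close>
definition d_fun :: "('a \<Rightarrow> 'a \<Rightarrow> 'a) \<Rightarrow> ('a \<Rightarrow> 'a) \<Rightarrow> ('a \<Rightarrow> 'a \<Rightarrow> real) \<Rightarrow> (nat \<Rightarrow> 'a) \<Rightarrow>
    ('a \<Rightarrow> 'a \<Rightarrow> 'a \<Rightarrow> real) \<Rightarrow> ('a \<Rightarrow> 'a) \<Rightarrow> ('a \<Rightarrow> nat \<Rightarrow> 'a) \<Rightarrow> 'a \<Rightarrow> 'a \<Rightarrow> real" where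
  "d_fun mul iv rho bs db c t g h =
     rho (mul g (iv g)) (mul h (iv h)) +
     (\<Sum>j. (1/2) ^ Suc j * P_fun mul iv rho db c t (bs (Suc j)) g h)"

end

theory Submission
  imports Defs
begin

text \<open>The function d is rho on the idempotent parts plus a weighted series of bounded
  pseudometrics, hence a bounded pseudometric. Each summand is continuous on S: the cut-off
  factor a_b(e) is 1-Lipschitz in e and vanishes wherever b is not below e, which is exactly
  where the map phihat jumps. So the d-topology is coarser than the compact topology of S
  and, being Hausdorff, equal to it. If d(x, y) = 0, then x x\<inverse> = y y\<inverse> = e and
  b x = b y for every basis element b way below all points of a neighbourhood of e; these b
  form an up-directed set with supremum e, so by (B3) x = y.\<close>

lemma compatible_metricD:
  assumes "compatible_metric M d X" "x \<in> M" "y \<in> M"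
  shows "0 \<le> d x y" "d x y = d y x" "d x y = 0 \<longleftrightarrow> x = y"
proof -
  interpret Metric_space M "restr_metric M d"
    using assms(1) by (simp add: compatible_metric_def)
  show "0 \<le> d x y" "d x y = d y x" "d x y = 0 \<longleftrightarrow> x = y"
    using nonneg[of x y] commute[of x y] zero[of x y] assms(2,3) by (simp_all add: restr_metric_def)
qed

lemma compatible_metric_triangle:
  assumes "compatible_metric M d X" "x \<in> M" "y \<in> M" "z \<in> M"
  shows "d x z \<le> d x y + d y z"
proof -
  interpret Metric_space M "restr_metric M d"
    using assms(1) by (simp add: compatible_metric_def)
  show ?thesis
    using triangle[of x y z] assms(2-4) by (simp add: restr_metric_def)
qed

lemma compatible_metric_openin_ball:
  assumes "compatible_metric M d X" "x \<in> M"
  shows "openin X {y\<in>M. d x y < r}"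
proof -
  interpret Metric_space M "restr_metric M d"
    using assms(1) by (simp add: compatible_metric_def)
  have "mball x r = {y\<in>M. d x y < r}"
    using assms(2) by (auto simp: restr_metric_def)
  then show ?thesis
    using openin_mball[of x r] assms(1) by (simp add: compatible_metric_def)
qed

lemma compatible_metric_closedin_cball:
  assumes "compatible_metric M d X" "x \<in> M"
  shows "closedin X {y\<in>M. d x y \<le> r}"
proof -
  interpret Metric_space M "restr_metric M d"
    using assms(1) by (simp add: compatible_metric_def)
  have "mcball x r = {y\<in>M. d x y \<le> r}"
    using assms(2) by (auto simp: restr_metric_def)
  then show ?thesis
    using closedin_mcball[of x r] assms(1) by (simp add: compatible_metric_def)
qed

lemma compatible_metric_ball_subset:
  assumes "compatible_metric M d X" "openin X U" "x \<in> U"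
  shows "\<exists>r>0. \<forall>y\<in>M. d x y < r \<longrightarrow> y \<in> U"
proof -
  interpret Metric_space M "restr_metric M d"
    using assms(1) by (simp add: compatible_metric_def)
  have U: "openin mtopology U"
    using assms(1,2) by (simp add: compatible_metric_def)
  then obtain r where "r > 0" "mball x r \<subseteq> U"
    using assms(3) openin_mtopology by blast
  moreover have "x \<in> M"
    using U assms(3) openin_subset by fastforce
  ultimately show ?thesis
    by (metis in_mball restr_metric_def subsetD)
qed

lemma compatible_metric_Lipschitz_imp_continuous_on:
  fixes f :: "'a::topological_space \<Rightarrow> real"
  assumes "compatible_metric M d (subtopology euclidean M)" "0 \<le> L"
    and "\<And>x y. x \<in> M \<Longrightarrow> y \<in> M \<Longrightarrow> \<bar>f x - f y\<bar> \<le> L * d x y"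
  shows "continuous_on M f"
proof -
  interpret Metric_space M "restr_metric M d"
    using assms(1) by (simp add: compatible_metric_def)
  have "continuous_map mtopology euclidean f"
    unfolding continuous_map_from_metric
  proof (intro conjI ballI allI impI)
    fix a U assume a: "a \<in> M" and U: "openin euclidean U \<and> f a \<in> U"
    then obtain \<epsilon> where \<epsilon>: "\<epsilon> > 0" "ball (f a) \<epsilon> \<subseteq> U"
      using openE[of U "f a"] by auto
    define r where "r = \<epsilon> / (L + 1)"
    have "f x \<in> U" if "x \<in> M" "restr_metric M d a x < r" for x
    proof -
      have "\<bar>f a - f x\<bar> \<le> L * d a x"
        using assms(3)[OF a that(1)] .
      also have "\<dots> \<le> L * r"
        using that a assms(2) by (simp add: restr_metric_def mult_left_mono)
      also have "\<dots> < \<epsilon>"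
        using \<epsilon>(1) assms(2) by (simp add: r_def field_simps)
      finally show ?thesis
        using \<epsilon>(2) by (auto simp: dist_real_def)
    qed
    moreover have "r > 0"
      using \<epsilon>(1) assms(2) by (simp add: r_def)
    ultimately show "\<exists>r>0. \<forall>x. x \<in> M \<and> restr_metric M d a x < r \<longrightarrow> f x \<in> U"
      by blast
  qed simp
  then show ?thesis
    using assms(1) by (simp add: compatible_metric_def)
qed

lemma compatible_metric_dense_determines:
  assumes "compatible_metric M d (subtopology euclidean M)"
    and "T \<subseteq> M" "subtopology euclidean M closure_of T = M"
    and "x \<in> M" "y \<in> M" "\<And>z. z \<in> T \<Longrightarrow> d x z = d y z"
  shows "x = y"
proof -
  have small: "d x y < \<epsilon>" if "\<epsilon> > 0" for \<epsilon>
  proof -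
    have "openin (subtopology euclidean M) {z\<in>M. d y z < \<epsilon> / 2}"
      by (rule compatible_metric_openin_ball[OF assms(1,5)])
    moreover have "y \<in> {z\<in>M. d y z < \<epsilon> / 2}"
      using compatible_metricD(3)[OF assms(1,5,5)] assms(5) that by auto
    moreover have "y \<in> subtopology euclidean M closure_of T"
      using assms(3,5) by simp
    ultimately obtain z where z: "z \<in> T" "d y z < \<epsilon> / 2"
      unfolding in_closure_of by (metis (no_types, lifting) mem_Collect_eq)
    have "z \<in> M"
      using z(1) assms(2) by blast
    then have "d x y \<le> d x z + d z y" "d z y = d y z"
      using compatible_metric_triangle[OF assms(1,4) _ assms(5)] compatible_metricD(2)[OF assms(1) _ assms(5)]
      by blast+
    then show ?thesis
      using z assms(6)[OF z(1)] by linarith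
  qed
  have "d x y = 0"
    using small[of "d x y"] compatible_metricD(1)[OF assms(1,4,5)] by (cases "0 < d x y") auto
  then show ?thesis
    using compatible_metricD(3)[OF assms(1,4,5)] by blast
qed

section \<open>Weighted series of bounded pseudometrics\<close>

definition bounded_pseudometric :: "('a \<Rightarrow> 'a \<Rightarrow> real) \<Rightarrow> real \<Rightarrow> bool" where
  "bounded_pseudometric p C \<longleftrightarrow>
     (\<forall>x y. 0 \<le> p x y \<and> p x y \<le> C \<and> p x y = p y x) \<and> (\<forall>x. p x x = 0) \<and>
     (\<forall>x y z. p x z \<le> p x y + p y z)"

lemma bounded_pseudometric_abs_diff:
  "(\<And>x. 0 \<le> f x \<and> f x \<le> K) \<Longrightarrow> bounded_pseudometric (\<lambda>x y. \<bar>f x - f y\<bar>) K"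
  unfolding bounded_pseudometric_def by (smt (verit))

lemma bounded_pseudometric_add:
  "bounded_pseudometric p C \<Longrightarrow> bounded_pseudometric q D \<Longrightarrow>
     bounded_pseudometric (\<lambda>x y. p x y + q x y) (C + D)"
  unfolding bounded_pseudometric_def by (smt (verit))

lemma summable_halves_bounded:
  fixes f :: "nat \<Rightarrow> real"
  assumes "\<And>n. \<bar>f n\<bar> \<le> C"
  shows "summable (\<lambda>n. (1/2) ^ Suc n * f n)"
proof (rule summable_comparison_test)
  show "summable (\<lambda>n. C * (1/2::real) ^ Suc n)"
    using power_half_series summable_mult sums_summable by blast
  show "\<exists>N. \<forall>n\<ge>N. norm ((1/2::real) ^ Suc n * f n) \<le> C * (1/2) ^ Suc n"
    using assms by (auto simp: abs_mult mult.commute intro!: mult_right_mono)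
qed

lemma suminf_halves_le:
  fixes f g :: "nat \<Rightarrow> real"
  assumes "\<And>n. \<bar>f n\<bar> \<le> C" "\<And>n. \<bar>g n\<bar> \<le> C" "\<And>n. f n \<le> g n"
  shows "(\<Sum>n. (1/2) ^ Suc n * f n) \<le> (\<Sum>n. (1/2) ^ Suc n * g n)"
  using assms by (intro suminf_le summable_halves_bounded) auto

lemma suminf_halves_const: "(\<Sum>n. (1/2::real) ^ Suc n * C) = C"
proof -
  have "(\<lambda>n. (1/2::real) ^ Suc n * C) sums (1 * C)"
    by (rule sums_mult2[OF power_half_series])
  then show ?thesis
    by (simp add: sums_iff)
qed

lemma suminf_halves_eq_0_iff:
  fixes f :: "nat \<Rightarrow> real"
  assumes "\<And>n. 0 \<le> f n \<and> f n \<le> C"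
  shows "(\<Sum>n. (1/2) ^ Suc n * f n) = 0 \<longleftrightarrow> (\<forall>n. f n = 0)"
proof -
  have "summable (\<lambda>n. (1/2::real) ^ Suc n * f n)"
    by (rule summable_halves_bounded[of _ C]) (use assms in force)
  then show ?thesis
    using assms by (subst suminf_eq_zero_iff) auto
qed

lemma bounded_pseudometric_suminf:
  assumes "\<And>n. bounded_pseudometric (p n) C"
  shows "bounded_pseudometric (\<lambda>x y. \<Sum>n. (1/2) ^ Suc n * p n x y) C"
proof -
  have bnd: "0 \<le> p n x y \<and> p n x y \<le> C" for n x y
    using assms[of n] by (simp add: bounded_pseudometric_def)
  then have C: "0 \<le> C"
    by fastforce
  have sum: "summable (\<lambda>n. (1/2::real) ^ Suc n * p n x y)" for x y
    by (rule summable_halves_bounded[of _ C]) (use bnd in force)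
  have nonneg: "0 \<le> (\<Sum>n. (1/2::real) ^ Suc n * p n x y)" for x y
    using bnd by (intro suminf_nonneg sum) simp
  have le_C: "(\<Sum>n. (1/2::real) ^ Suc n * p n x y) \<le> C" for x y
  proof -
    have "(\<Sum>n. (1/2::real) ^ Suc n * p n x y) \<le> (\<Sum>n. (1/2) ^ Suc n * C)"
      using bnd C by (intro suminf_halves_le[of _ C]) auto
    also have "\<dots> = C"
      by (rule suminf_halves_const)
    finally show ?thesis .
  qed
  have triangle: "(\<Sum>n. (1/2::real) ^ Suc n * p n x z) \<le>
      (\<Sum>n. (1/2) ^ Suc n * p n x y) + (\<Sum>n. (1/2) ^ Suc n * p n y z)" for x y z
  proof -
    have "\<bar>p n x z\<bar> \<le> 2 * C" "\<bar>p n x y + p n y z\<bar> \<le> 2 * C" for n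
      using bnd[of n x z] bnd[of n x y] bnd[of n y z] C by auto
    moreover have "p n x z \<le> p n x y + p n y z" for n
      using assms[of n] unfolding bounded_pseudometric_def by blast
    ultimately have "(\<Sum>n. (1/2::real) ^ Suc n * p n x z) \<le> (\<Sum>n. (1/2) ^ Suc n * (p n x y + p n y z))"
      by (rule suminf_halves_le)
    also have "\<dots> = (\<Sum>n. (1/2) ^ Suc n * p n x y) + (\<Sum>n. (1/2) ^ Suc n * p n y z)"
      using sum by (simp add: distrib_left suminf_add)
    finally show ?thesis .
  qed
  have "p n x y = p n y x" "p n x x = 0" for n x y
    using assms[of n] by (simp_all add: bounded_pseudometric_def)
  then have "(\<Sum>n. (1/2::real) ^ Suc n * p n x y) = (\<Sum>n. (1/2) ^ Suc n * p n y x)"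
    "(\<Sum>n. (1/2::real) ^ Suc n * p n x x) = 0" for x y
    by simp_all
  then show ?thesis
    unfolding bounded_pseudometric_def using nonneg le_C triangle by blast
qed

lemma continuous_on_suminf_halves:
  fixes f :: "nat \<Rightarrow> 'a::topological_space \<Rightarrow> real"
  assumes "\<And>n. continuous_on UNIV (f n)" "\<And>n y. \<bar>f n y\<bar> \<le> C"
  shows "continuous_on UNIV (\<lambda>y. \<Sum>n. (1/2) ^ Suc n * f n y)"
proof (rule uniform_limit_theorem)
  show "uniform_limit UNIV (\<lambda>m y. \<Sum>n<m. (1/2) ^ Suc n * f n y)
      (\<lambda>y. \<Sum>n. (1/2) ^ Suc n * f n y) sequentially"
  proof (rule Weierstrass_m_test)
    show "summable (\<lambda>n. C * (1/2::real) ^ Suc n)"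
      using power_half_series summable_mult sums_summable by blast
    show "norm ((1/2::real) ^ Suc n * f n y) \<le> C * (1/2) ^ Suc n" for n y
      using assms(2)[of n y] by (simp add: abs_mult mult.commute mult_left_mono)
  qed
  show "\<forall>\<^sub>F m in sequentially. continuous_on UNIV (\<lambda>y. \<Sum>n<m. (1/2) ^ Suc n * f n y)"
    using assms(1) by (intro always_eventually allI continuous_intros) auto
qed simp

lemma continuous_on_mult_vanishing:
  fixes g h :: "'a::t2_space \<Rightarrow> real"
  assumes g: "continuous_on UNIV g" "\<And>y. 0 \<le> g y"
    and h: "continuous_on {y. 0 < g y} h" "\<And>y. \<bar>h y\<bar> \<le> 1"
  shows "continuous_on UNIV (\<lambda>y. g y * h y)"
proof (rule continuous_at_imp_continuous_on, intro ballI)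
  fix y0
  have g_at: "isCont g y0"
    using g(1) by (simp add: continuous_on_eq_continuous_at)
  show "isCont (\<lambda>y. g y * h y) y0"
  proof (cases "0 < g y0")
    case True
    have "open {y. 0 < g y}"
      using g(1) by (intro open_Collect_less continuous_intros) auto
    then have "isCont h y0"
      using h(1) True by (simp add: continuous_on_eq_continuous_at)
    then show ?thesis
      using g_at by (intro continuous_intros)
  next
    case False
    then have "g y0 = 0"
      using g(2)[of y0] by linarith
    then have g_lim: "(g \<longlongrightarrow> 0) (at y0)"
      using g_at by (simp add: isCont_def)
    have "\<forall>\<^sub>F y in at y0. norm (g y * h y) \<le> g y"
    proof (intro always_eventually allI)
      fix y
      show "norm (g y * h y) \<le> g y"
        using g(2)[of y] h(2)[of y] mult_left_le[of "\<bar>h y\<bar>" "g y"] by (simp add: abs_mult)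
    qed
    then have "((\<lambda>y. g y * h y) \<longlongrightarrow> 0) (at y0)"
      using g_lim by (rule Lim_null_comparison)
    then show ?thesis
      using \<open>g y0 = 0\<close> by (simp add: isCont_def)
  qed
qed

lemma compact_space_metric_topology_eq:
  fixes d :: "'a::topological_space \<Rightarrow> 'a \<Rightarrow> real"
  assumes "Metric_space UNIV d" "compact (UNIV :: 'a set)" "\<And>x. continuous_on UNIV (d x)"
  shows "Metric_space.mtopology UNIV d = euclidean"
proof -
  interpret Metric_space UNIV d
    by (rule assms(1))
  have "open U" if U: "openin mtopology U" for U
  proof -
    have "\<exists>T. open T \<and> x \<in> T \<and> T \<subseteq> U" if "x \<in> U" for x
    proof -
      obtain r where r: "r > 0" "mball x r \<subseteq> U"
        using U \<open>x \<in> U\<close> unfolding openin_mtopology by blast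
      have "open {y. d x y < r}"
        using assms(3) by (intro open_Collect_less continuous_intros) auto
      moreover have "mball x r = {y. d x y < r}"
        by auto
      ultimately show ?thesis
        using r centre_in_mball_iff[of x r] by auto
    qed
    then show ?thesis
      using open_subopen by blast
  qed
  then have "continuous_map euclidean mtopology id"
    using topology_finer_continuous_id[of mtopology euclidean] by simp
  moreover have "compact_space (euclidean :: 'a topology)"
    using assms(2) by (simp add: compact_space_def)
  ultimately have "homeomorphic_map euclidean mtopology id"
    using Hausdorff_space_mtopology by (intro continuous_imp_homeomorphic_map) auto
  then show ?thesis
    by simp
qed

section \<open>Clifford semigroups with a perfect semilattice of idempotents\<close>

locale perfect_clifford =
  fixes mul :: "'a::t2_space \<Rightarrow> 'a \<Rightarrow> 'a" and iv :: "'a \<Rightarrow> 'a"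
  assumes clifford: "topological_clifford_semigroup mul iv"
    and perfect: "perfect_semilattice mul (idems mul)"
begin

abbreviation "E \<equiv> idems mul"
abbreviation "le \<equiv> sle mul"
abbreviation "G \<equiv> Grp mul iv"
abbreviation "X \<equiv> subtopology euclidean E"

definition idem_of :: "'a \<Rightarrow> 'a" where
  "idem_of x = mul x (iv x)"

lemma assoc: "mul (mul x y) z = mul x (mul y z)"
  using clifford unfolding topological_clifford_semigroup_def clifford_semigroup_def by blast

lemma eq_iv_iff: "(mul (mul x y) x = x \<and> mul (mul y x) y = y) \<longleftrightarrow> y = iv x"
  using clifford unfolding topological_clifford_semigroup_def clifford_semigroup_def by blast

lemma idem_of_idem: "mul (idem_of x) (idem_of x) = idem_of x"
  using eq_iv_iff[of x "iv x"] by (simp add: idem_of_def assoc)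

lemma idem_of_in_idems: "idem_of x \<in> E"
  using idem_of_idem by (simp add: idems_def)

lemma in_Grp_idem_of: "x \<in> G (idem_of x)"
  by (simp add: Grp_def idem_of_def)

lemma idems_commute: "x \<in> E \<Longrightarrow> y \<in> E \<Longrightarrow> mul x y = mul y x"
  using perfect unfolding perfect_semilattice_def by blast

lemma idems_idem: "x \<in> E \<Longrightarrow> mul x (mul x z) = mul x z"
  by (simp add: idems_def flip: assoc)

lemma le_refl: "x \<in> E \<Longrightarrow> le x x"
  by (simp add: sle_def idems_def)

lemma le_trans: "le x y \<Longrightarrow> le y z \<Longrightarrow> le x z"
  unfolding sle_def by (metis assoc)

lemma mul_in_Grp:
  assumes b: "b \<in> E" and "le b e" and x: "x \<in> G e"
  shows "mul b x \<in> G b"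
proof -
  have ex: "mul x (iv x) = e"
    using x by (simp add: Grp_def)
  then have "e \<in> E"
    using idem_of_in_idems[of x] by (simp add: idem_of_def)
  then have eb: "mul e b = b"
    using \<open>le b e\<close> idems_commute[OF b] by (simp add: sle_def)
  have bb: "mul b b = b"
    using b by (simp add: idems_def)
  have x_iv: "mul x (mul (iv x) z) = mul e z" for z
    using ex assoc by metis
  have e_b: "mul e (mul b z) = mul b z" for z
    using eb assoc by metis
  let ?y = "mul (iv x) b"
  have "mul (mul (mul b x) ?y) (mul b x) = mul b x"
    by (simp add: assoc x_iv e_b idems_idem[OF b])
  moreover have "mul (mul ?y (mul b x)) ?y = ?y"
    by (simp add: assoc x_iv idems_idem[OF b] eb bb)
  ultimately have "?y = iv (mul b x)"
    using eq_iv_iff by blast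
  then have "mul (mul b x) (iv (mul b x)) = b"
    by (metis assoc x_iv eb bb)
  then show ?thesis
    by (simp add: Grp_def)
qed

lemma continuous_on_mul:
  assumes "continuous_on A f" "continuous_on A g"
  shows "continuous_on A (\<lambda>x. mul (f x) (g x))"
proof -
  have "continuous_on UNIV (\<lambda>p. mul (fst p) (snd p))"
    using clifford unfolding topological_clifford_semigroup_def by blast
  from continuous_on_compose2[OF this continuous_on_Pair[OF assms]] show ?thesis
    by simp
qed

lemma continuous_idem_of: "continuous_on UNIV idem_of"
proof -
  have "continuous_on UNIV iv"
    using clifford unfolding topological_clifford_semigroup_def by blast
  then show ?thesis
    unfolding idem_of_def by (intro continuous_on_mul continuous_on_id)
qed

lemma closedin_down_set: "closedin X {z\<in>E. le z u}"
proof -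
  have "closed {z. mul z u = z}"
    by (intro closed_Collect_eq continuous_on_mul[OF continuous_on_id continuous_on_const]
        continuous_on_id)
  then have "closedin X (E \<inter> {z. mul z u = z})"
    by (rule closedin_closed_Int)
  moreover have "E \<inter> {z. mul z u = z} = {z\<in>E. le z u}"
    by (auto simp: sle_def)
  ultimately show ?thesis
    by simp
qed

lemma subsemilattice_finite_lower_bound:
  assumes "finite F" "F \<noteq> {}" "F \<subseteq> V" "V \<subseteq> E" "\<forall>a\<in>V. \<forall>b\<in>V. mul a b \<in> V"
  shows "\<exists>z\<in>V. \<forall>y\<in>F. le z y"
  using assms(1-3)
proof (induction F rule: finite_ne_induct)
  case (singleton x)
  then show ?case
    using le_refl assms(4) by blast
next
  case (insert x F)
  then obtain z where z: "z \<in> V" "\<forall>y\<in>F. le z y"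
    by blast
  have x: "x \<in> V"
    using insert by blast
  then have "x \<in> E" "z \<in> E"
    using z(1) assms(4) by blast+
  then have "le (mul x z) x"
    unfolding sle_def by (metis assoc idems_commute idems_idem)
  moreover have "le (mul x z) y" if "y \<in> F" for y
    using z(2) that unfolding sle_def by (metis assoc)
  moreover have "mul x z \<in> V"
    using assms(5) x z by blast
  ultimately show ?case
    by blast
qed

lemma way_below_imp_le: "way_below E le b y \<Longrightarrow> y \<in> E \<Longrightarrow> le b y"
proof -
  assume wb: "way_below E le b y" and y: "y \<in> E"
  have "updirected E le {y}" "is_sup E le {y} y"
    using y le_refl by (auto simp: updirected_def is_sup_def)
  then show "le b y"
    using wb le_refl[OF y] unfolding way_below_def by blast
qed

lemma way_below_le_trans: "way_below E le b m \<Longrightarrow> le m y \<Longrightarrow> way_below E le b y"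
  unfolding way_below_def by (meson le_trans)

end

locale perfect_clifford_basis = perfect_clifford mul iv
  for mul :: "'a::t2_space \<Rightarrow> 'a \<Rightarrow> 'a" and iv +
  fixes rho :: "'a \<Rightarrow> 'a \<Rightarrow> real" and bs :: "nat \<Rightarrow> 'a"
  assumes rho: "compatible_metric (idems mul) rho (subtopology euclidean (idems mul))"
    and rho_le_1: "\<And>x y. x \<in> idems mul \<Longrightarrow> y \<in> idems mul \<Longrightarrow> rho x y \<le> 1"
    and basis: "domain_basis (idems mul) (sle mul) (bs ` {1..})"
begin

abbreviation "B \<equiv> bs ` {1..}"

lemmas rho_nonneg = compatible_metricD(1)[OF rho]
  and rho_commute = compatible_metricD(2)[OF rho]
  and rho_zero = compatible_metricD(3)[OF rho]
  and rho_triangle = compatible_metric_triangle[OF rho]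

lemma basis_subset: "B \<subseteq> E"
  using basis unfolding domain_basis_def by blast

lemma basis_way_below:
  "x \<in> E \<Longrightarrow> updirected E le {b\<in>B. way_below E le b x} \<and> is_sup E le {b\<in>B. way_below E le b x} x"
  using basis unfolding domain_basis_def by blast

text \<open>Every neighbourhood of e contains a subsemilattice neighbourhood V; compactness of E
  and the finite intersection property of the closed sets {z. z \<le> y} \<inter> K, y \<in> V, with K a
  small closed ball around e, give a common lower bound m of V close to e.\<close>

lemma close_lower_bound_of_nbhd:
  assumes e: "e \<in> E" and r: "r > 0"
  obtains V m where "openin X V" "e \<in> V" "m \<in> E" "rho e m < r" "\<forall>y\<in>V. le m y"
proof -
  have "openin X {y\<in>E. rho e y < r/2}"
    by (rule compatible_metric_openin_ball[OF rho e])
  moreover have "e \<in> {y\<in>E. rho e y < r/2}"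
    using e r rho_zero[OF e e] by auto
  ultimately obtain V where V: "openin X V" "e \<in> V" "V \<subseteq> {y\<in>E. rho e y < r/2}"
    "\<forall>a\<in>V. \<forall>b\<in>V. mul a b \<in> V"
    using perfect e unfolding perfect_semilattice_def by meson
  define K where "K = {z\<in>E. rho e z \<le> r/2}"
  define U where "U = (\<lambda>y. {z\<in>E. le z y} \<inter> K) ` V"
  have "compact_space X"
    using perfect unfolding perfect_semilattice_def by (simp add: compact_space_subtopology)
  moreover have "closedin X C" if "C \<in> U" for C
    using that closedin_down_set compatible_metric_closedin_cball[OF rho e]
    unfolding U_def K_def by blast
  moreover have "\<Inter>F \<noteq> {}" if F: "finite F" "F \<subseteq> U" for F
  proof -
    obtain V' where V': "V' \<subseteq> V" "finite V'" "F = (\<lambda>y. {z\<in>E. le z y} \<inter> K) ` V'"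
      using F unfolding U_def by (meson finite_subset_image)
    show ?thesis
    proof (cases "V' = {}")
      case True
      then show ?thesis
        using V' by simp
    next
      case False
      then obtain z where "z \<in> V" "\<forall>y\<in>V'. le z y"
        using subsemilattice_finite_lower_bound[OF V'(2) False V'(1)] V(3,4) by blast
      then have "z \<in> \<Inter>F"
        using V' V(3) by (auto simp: K_def)
      then show ?thesis
        by blast
    qed
  qed
  ultimately have "\<Inter>U \<noteq> {}"
    unfolding compact_space_fip by blast
  then obtain m where m: "m \<in> \<Inter>U"
    by blast
  then have "m \<in> K"
    using V(2) unfolding U_def by blast
  then have "m \<in> E" "rho e m < r"
    using r unfolding K_def by auto
  moreover have "\<forall>y\<in>V. le m y"
    using m unfolding U_def by blast
  ultimately show ?thesis
    using that V(1,2) by blast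
qed

text \<open>In the paper these are the basis elements b \<ll> e. The two notions agree because the
  sets {x. b \<ll> x} are Lawson open, a fact avoided here by using the neighbourhood form.\<close>

definition approximants :: "'a \<Rightarrow> 'a set" where
  "approximants e = {b\<in>B. \<exists>V. openin X V \<and> e \<in> V \<and> (\<forall>y\<in>V. way_below E le b y)}"

lemma approximants_subset: "approximants e \<subseteq> B"
  unfolding approximants_def by blast

lemma way_below_lower_bound_approximants:
  assumes "openin X V" "e \<in> V" "\<forall>y\<in>V. le m y" "b \<in> B" "way_below E le b m"
  shows "b \<in> approximants e"
  using assms way_below_le_trans unfolding approximants_def by blast

lemma updirected_approximants:
  assumes e: "e \<in> E"
  shows "updirected E le (approximants e)"
proof -
  have "\<exists>c\<in>approximants e. le a c \<and> le b c" if ab: "a \<in> approximants e" "b \<in> approximants e"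
    for a b
  proof -
    obtain V1 V2 where V1: "openin X V1" "e \<in> V1" "\<forall>y\<in>V1. way_below E le a y"
      and V2: "openin X V2" "e \<in> V2" "\<forall>y\<in>V2. way_below E le b y"
      using ab unfolding approximants_def by blast
    obtain r where r: "r > 0" "\<forall>y\<in>E. rho e y < r \<longrightarrow> y \<in> V1 \<inter> V2"
      using compatible_metric_ball_subset[OF rho, of "V1 \<inter> V2"] V1 V2 by blast
    obtain V m where V: "openin X V" "e \<in> V" "m \<in> E" "rho e m < r" "\<forall>y\<in>V. le m y"
      using close_lower_bound_of_nbhd[OF e r(1)] by blast
    let ?D = "{b\<in>B. way_below E le b m}"
    have D: "updirected E le ?D" "is_sup E le ?D m"
      using basis_way_below[OF V(3)] by blast+
    have "m \<in> V1" "m \<in> V2"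
      using r V by blast+
    then have "way_below E le a m" "way_below E le b m"
      using V1(3) V2(3) by blast+
    then obtain c1 c2 where "c1 \<in> ?D" "le a c1" "c2 \<in> ?D" "le b c2"
      using D le_refl[OF V(3)] unfolding way_below_def by meson
    moreover obtain c where "c \<in> ?D" "le c1 c" "le c2 c"
      using D(1) calculation unfolding updirected_def by blast
    ultimately show ?thesis
      using way_below_lower_bound_approximants[OF V(1,2,5)] le_trans by blast
  qed
  moreover obtain V m where "openin X V" "e \<in> V" "m \<in> E" "rho e m < 1" "\<forall>y\<in>V. le m y"
    by (rule close_lower_bound_of_nbhd[OF e zero_less_one])
  then have "approximants e \<noteq> {}"
    using basis_way_below way_below_lower_bound_approximants unfolding updirected_def by blast
  ultimately show ?thesis
    using approximants_subset basis_subset unfolding updirected_def by blast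
qed

lemma is_sup_approximants:
  assumes e: "e \<in> E"
  shows "is_sup E le (approximants e) e"
proof -
  have "le e u" if u: "u \<in> E" "\<forall>b\<in>approximants e. le b u" for u
  proof (rule ccontr)
    assume "\<not> le e u"
    moreover have "openin X (E - {z\<in>E. le z u})"
      using closedin_down_set[of u] unfolding closedin_def by simp
    ultimately obtain r where "r > 0" "\<forall>y\<in>E. rho e y < r \<longrightarrow> y \<in> E - {z\<in>E. le z u}"
      using compatible_metric_ball_subset[OF rho, of "E - {z\<in>E. le z u}" e] e by blast
    then have r: "r > 0" "\<forall>y\<in>E. rho e y < r \<longrightarrow> \<not> le y u"
      by auto
    obtain V m where V: "openin X V" "e \<in> V" "m \<in> E" "rho e m < r" "\<forall>y\<in>V. le m y"
      using close_lower_bound_of_nbhd[OF e r(1)] by blast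
    have "\<forall>b\<in>{b\<in>B. way_below E le b m}. le b u"
      using u way_below_lower_bound_approximants[OF V(1,2,5)] by blast
    then have "le m u"
      using basis_way_below[OF V(3)] u unfolding is_sup_def by blast
    then show False
      using r V by blast
  qed
  moreover have "le b e" if "b \<in> approximants e" for b
    using that e way_below_imp_le unfolding approximants_def by blast
  ultimately show ?thesis
    using e unfolding is_sup_def by blast
qed

lemma a_fun_bottom: "\<forall>x\<in>E. le b x \<Longrightarrow> a_fun mul rho b e = 1"
  by (simp add: a_fun_def)

lemma a_fun_eq_Inf:
  "\<not> (\<forall>x\<in>E. le b x) \<Longrightarrow> a_fun mul rho b e = Inf (rho e ` (E - wb_up E le b))"
  unfolding a_fun_def Let_def by (rule if_not_P)

lemma not_way_below_nonempty: "\<not> (\<forall>x\<in>E. le b x) \<Longrightarrow> E - wb_up E le b \<noteq> {}"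
  using way_below_imp_le unfolding wb_up_def by blast

lemma a_fun_nonneg:
  assumes e: "e \<in> E"
  shows "0 \<le> a_fun mul rho b e"
proof (cases "\<forall>x\<in>E. le b x")
  case False
  have "0 \<le> Inf (rho e ` (E - wb_up E le b))"
    using not_way_below_nonempty[OF False] rho_nonneg[OF e] by (intro cInf_greatest) auto
  then show ?thesis
    using False by (simp add: a_fun_eq_Inf)
qed (simp add: a_fun_bottom)

lemma a_fun_le_1:
  assumes e: "e \<in> E"
  shows "a_fun mul rho b e \<le> 1"
proof (cases "\<forall>x\<in>E. le b x")
  case False
  then obtain y where y: "y \<in> E - wb_up E le b"
    using not_way_below_nonempty by blast
  have "bdd_below (rho e ` (E - wb_up E le b))"
    using rho_nonneg e by (auto simp: bdd_below_def)
  then have "Inf (rho e ` (E - wb_up E le b)) \<le> rho e y"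
    using y by (intro cInf_lower) auto
  moreover have "rho e y \<le> 1"
    using rho_le_1[OF e] y by blast
  ultimately show ?thesis
    using False by (simp add: a_fun_eq_Inf)
qed (simp add: a_fun_bottom)

lemma a_fun_pos_imp_le:
  assumes e: "e \<in> E" and pos: "a_fun mul rho b e > 0"
  shows "le b e"
proof (cases "\<forall>x\<in>E. le b x")
  case False
  have "e \<in> wb_up E le b"
  proof (rule ccontr)
    assume "e \<notin> wb_up E le b"
    moreover have "bdd_below (rho e ` (E - wb_up E le b))"
      using rho_nonneg e by (auto simp: bdd_below_def)
    ultimately have "Inf (rho e ` (E - wb_up E le b)) \<le> rho e e"
      using e by (intro cInf_lower) auto
    then show False
      using pos False rho_zero[OF e e] by (simp add: a_fun_eq_Inf)
  qed
  then show ?thesis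
    using way_below_imp_le e unfolding wb_up_def by blast
qed (use e in blast)

lemma a_fun_Lipschitz:
  assumes e: "e \<in> E" and f: "f \<in> E"
  shows "\<bar>a_fun mul rho b e - a_fun mul rho b f\<bar> \<le> rho e f"
proof (cases "\<forall>x\<in>E. le b x")
  case False
  let ?C = "E - wb_up E le b"
  have Inf_le: "Inf (rho x ` ?C) - rho x y \<le> Inf (rho y ` ?C)" if "x \<in> E" "y \<in> E" for x y
  proof (rule cInf_greatest)
    show "rho y ` ?C \<noteq> {}"
      using not_way_below_nonempty[OF False] by blast
    fix v assume "v \<in> rho y ` ?C"
    then obtain z where z: "z \<in> ?C" "v = rho y z"
      by blast
    have "bdd_below (rho x ` ?C)"
      using rho_nonneg that unfolding bdd_below_def by blast
    then have "Inf (rho x ` ?C) \<le> rho x z"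
      using z by (intro cInf_lower) auto
    then show "Inf (rho x ` ?C) - rho x y \<le> v"
      using rho_triangle[of x y z] that z by force
  qed
  show ?thesis
    using Inf_le[OF e f] Inf_le[OF f e] rho_commute[OF e f] False
    by (simp add: a_fun_eq_Inf abs_le_iff)
qed (use rho_nonneg e f in \<open>simp add: a_fun_bottom\<close>)

lemma a_fun_pos_approximants:
  assumes e: "e \<in> E" and b: "b \<in> approximants e"
  shows "a_fun mul rho b e > 0"
proof (cases "\<forall>x\<in>E. le b x")
  case False
  obtain V where V: "openin X V" "e \<in> V" "\<forall>y\<in>V. way_below E le b y"
    using b unfolding approximants_def by blast
  obtain r where r: "r > 0" "\<forall>y\<in>E. rho e y < r \<longrightarrow> y \<in> V"
    using compatible_metric_ball_subset[OF rho V(1,2)] by blast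
  have "r \<le> Inf (rho e ` (E - wb_up E le b))"
  proof (rule cInf_greatest)
    show "rho e ` (E - wb_up E le b) \<noteq> {}"
      using not_way_below_nonempty[OF False] by blast
    fix v assume "v \<in> rho e ` (E - wb_up E le b)"
    then obtain y where "y \<in> E" "y \<notin> wb_up E le b" "v = rho e y"
      by blast
    then show "r \<le> v"
      using r V(3) unfolding wb_up_def by force
  qed
  then show ?thesis
    using r False by (simp add: a_fun_eq_Inf)
qed (simp add: a_fun_bottom)

lemma continuous_on_a_fun: "continuous_on E (a_fun mul rho b)"
  using a_fun_Lipschitz by (intro compatible_metric_Lipschitz_imp_continuous_on[OF rho, of 1]) auto

end

section \<open>The metric d\<close>

lemma inverse_limit_preserving_injective:
  assumes "inverse_limit_preserving mul iv"
    and "updirected (idems mul) (sle mul) D" "is_sup (idems mul) (sle mul) D e"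
    and "x \<in> Grp mul iv e" "y \<in> Grp mul iv e" "\<forall>b\<in>D. mul b x = mul b y"
  shows "x = y"
proof -
  have "homeomorphic_map (subtopology euclidean (Grp mul iv e))
      (subtopology (product_topology (\<lambda>_. euclidean) D) (inv_limit mul iv D)) (\<lambda>g. \<lambda>b\<in>D. mul b g)"
    using assms(1-3) unfolding inverse_limit_preserving_def Let_def by blast
  then have "inj_on (\<lambda>g. \<lambda>b\<in>D. mul b g) (Grp mul iv e)"
    using homeomorphic_imp_injective_map by fastforce
  moreover have "(\<lambda>b\<in>D. mul b x) = (\<lambda>b\<in>D. mul b y)"
    using assms(6) by (intro restrict_ext) blast
  ultimately show ?thesis
    using assms(4,5) by (blast dest: inj_onD)
qed

locale clifford_metric_data = perfect_clifford_basis mul iv rho bs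
  for mul :: "'a::t2_space \<Rightarrow> 'a \<Rightarrow> 'a" and iv rho bs +
  fixes db :: "'a \<Rightarrow> 'a \<Rightarrow> 'a \<Rightarrow> real" and c :: "'a \<Rightarrow> 'a" and t :: "'a \<Rightarrow> nat \<Rightarrow> 'a"
  assumes inverse_limit: "inverse_limit_preserving mul iv"
    and db: "\<And>b. b \<in> bs ` {1..} \<Longrightarrow>
      compatible_metric (Grp mul iv b) (db b) (subtopology euclidean (Grp mul iv b))"
    and db_le_1: "\<And>b x y. b \<in> bs ` {1..} \<Longrightarrow> x \<in> Grp mul iv b \<Longrightarrow> y \<in> Grp mul iv b \<Longrightarrow>
      db b x y \<le> 1"
    and c: "\<And>b. b \<in> bs ` {1..} \<Longrightarrow> c b \<in> Grp mul iv b"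
    and t: "\<And>b. b \<in> bs ` {1..} \<Longrightarrow> t b ` {1..} \<subseteq> Grp mul iv b"
    and t_dense: "\<And>b. b \<in> bs ` {1..} \<Longrightarrow>
      subtopology euclidean (Grp mul iv b) closure_of (t b ` {1..}) = Grp mul iv b"
begin

abbreviation "P b \<equiv> P_fun mul iv rho db c t b"
abbreviation "d \<equiv> d_fun mul iv rho bs db c t"

definition P_term :: "'a \<Rightarrow> nat \<Rightarrow> 'a \<Rightarrow> real" where
  "P_term b k y = a_fun mul rho b (idem_of y) * db b (phihat mul c (idem_of y) b y) (t b (Suc k))"

lemma P_fun_eq:
  "P b x y = \<bar>a_fun mul rho b (idem_of x) - a_fun mul rho b (idem_of y)\<bar> +
     (\<Sum>k. (1/2) ^ Suc k * \<bar>P_term b k x - P_term b k y\<bar>)"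
  by (simp add: P_fun_def P_term_def idem_of_def Let_def)

lemma d_fun_eq:
  "d x y = rho (idem_of x) (idem_of y) + (\<Sum>j. (1/2) ^ Suc j * P (bs (Suc j)) x y)"
  by (simp add: d_fun_def idem_of_def)

lemma phihat_in_Grp: "b \<in> B \<Longrightarrow> phihat mul c (idem_of y) b y \<in> G b"
  using mul_in_Grp[OF _ _ in_Grp_idem_of] c basis_subset by (auto simp: phihat_def)

lemma t_in_Grp: "b \<in> B \<Longrightarrow> t b (Suc k) \<in> G b"
  using t by fastforce

lemma P_term_bounds:
  assumes "b \<in> B"
  shows "0 \<le> P_term b k y \<and> P_term b k y \<le> 1"
proof -
  have "0 \<le> db b (phihat mul c (idem_of y) b y) (t b (Suc k))"
    "db b (phihat mul c (idem_of y) b y) (t b (Suc k)) \<le> 1"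
    using compatible_metricD(1)[OF db] db_le_1 phihat_in_Grp t_in_Grp assms by blast+
  then show ?thesis
    using a_fun_nonneg a_fun_le_1 idem_of_in_idems unfolding P_term_def
    by (simp add: mult_le_one)
qed

lemma bounded_pseudometric_P_terms:
  "b \<in> B \<Longrightarrow> bounded_pseudometric (\<lambda>x y. \<Sum>k. (1/2) ^ Suc k * \<bar>P_term b k x - P_term b k y\<bar>) 1"
  using P_term_bounds by (intro bounded_pseudometric_suminf bounded_pseudometric_abs_diff)

lemma bounded_pseudometric_P:
  assumes "b \<in> B"
  shows "bounded_pseudometric (P b) 2"
proof -
  have "bounded_pseudometric (\<lambda>x y. \<bar>a_fun mul rho b (idem_of x) - a_fun mul rho b (idem_of y)\<bar>) 1"
    using a_fun_nonneg a_fun_le_1 idem_of_in_idems by (intro bounded_pseudometric_abs_diff) blast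
  then have "bounded_pseudometric (\<lambda>x y.
      \<bar>a_fun mul rho b (idem_of x) - a_fun mul rho b (idem_of y)\<bar> +
      (\<Sum>k. (1/2) ^ Suc k * \<bar>P_term b k x - P_term b k y\<bar>)) (1 + 1)"
    using bounded_pseudometric_P_terms[OF assms] by (rule bounded_pseudometric_add)
  then show ?thesis
    unfolding P_fun_eq by simp
qed

lemma bounded_pseudometric_d: "bounded_pseudometric d 3"
proof -
  have "bounded_pseudometric (\<lambda>x y. rho (idem_of x) (idem_of y)) 1"
    unfolding bounded_pseudometric_def
    using rho_nonneg rho_commute rho_zero rho_triangle rho_le_1 idem_of_in_idems by simp
  moreover have "bounded_pseudometric (\<lambda>x y. \<Sum>j. (1/2) ^ Suc j * P (bs (Suc j)) x y) 2"
    by (intro bounded_pseudometric_suminf bounded_pseudometric_P) simp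
  ultimately have "bounded_pseudometric (\<lambda>x y. rho (idem_of x) (idem_of y) +
      (\<Sum>j. (1/2) ^ Suc j * P (bs (Suc j)) x y)) (1 + 2)"
    by (rule bounded_pseudometric_add)
  then show ?thesis
    unfolding d_fun_eq by simp
qed

lemma P_eq_0_imp_mul_eq:
  assumes x: "idem_of x = e" and y: "idem_of y = e"
    and b: "b \<in> approximants e" and P: "P b x y = 0"
  shows "mul b x = mul b y"
proof -
  have e: "e \<in> E"
    using x idem_of_in_idems by blast
  have bB: "b \<in> B"
    using b approximants_subset by blast
  have pos: "a_fun mul rho b e > 0"
    by (rule a_fun_pos_approximants[OF e b])
  then have le: "le b e"
    by (rule a_fun_pos_imp_le[OF e])
  have bx_G: "mul b x \<in> G b" and by_G: "mul b y \<in> G b"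
    using mul_in_Grp[OF _ le] bB basis_subset in_Grp_idem_of[of x] in_Grp_idem_of[of y] x y
    by auto
  have bounds: "0 \<le> \<bar>P_term b k x - P_term b k y\<bar> \<and> \<bar>P_term b k x - P_term b k y\<bar> \<le> 1" for k
    using P_term_bounds[OF bB, of k x] P_term_bounds[OF bB, of k y] by linarith
  have "0 \<le> (\<Sum>k. (1/2) ^ Suc k * \<bar>P_term b k x - P_term b k y\<bar>)"
    using bounded_pseudometric_P_terms[OF bB] unfolding bounded_pseudometric_def by blast
  then have "(\<Sum>k. (1/2) ^ Suc k * \<bar>P_term b k x - P_term b k y\<bar>) = 0"
    using P unfolding P_fun_eq by linarith
  moreover have "(\<Sum>k. (1/2) ^ Suc k * \<bar>P_term b k x - P_term b k y\<bar>) = 0 \<longleftrightarrow>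
      (\<forall>k. \<bar>P_term b k x - P_term b k y\<bar> = 0)"
    by (rule suminf_halves_eq_0_iff) (rule bounds)
  ultimately have "\<bar>P_term b k x - P_term b k y\<bar> = 0" for k
    by blast
  then have "a_fun mul rho b e * db b (mul b x) (t b (Suc k)) =
      a_fun mul rho b e * db b (mul b y) (t b (Suc k))" for k
    using le x y by (simp add: P_term_def phihat_def)
  then have "db b (mul b x) (t b (Suc k)) = db b (mul b y) (t b (Suc k))" for k
    using pos by simp
  then have "db b (mul b x) z = db b (mul b y) z" if "z \<in> t b ` {1..}" for z
    using that Suc_pred by (metis (no_types, lifting) atLeast_iff imageE less_eq_Suc_le One_nat_def)
  then show ?thesis
    using compatible_metric_dense_determines[OF db[OF bB] t[OF bB] t_dense[OF bB] bx_G by_G] by blast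
qed

lemma d_eq_0_imp_eq:
  assumes "d x y = 0"
  shows "x = y"
proof -
  define e where "e = idem_of x"
  have P_bounds: "0 \<le> P (bs (Suc j)) x y \<and> P (bs (Suc j)) x y \<le> 2" for j
    using bounded_pseudometric_P[of "bs (Suc j)"] unfolding bounded_pseudometric_def by simp
  then have "0 \<le> (\<Sum>j. (1/2) ^ Suc j * P (bs (Suc j)) x y)"
    by (intro suminf_nonneg summable_halves_bounded[of _ 2]) auto
  moreover have "0 \<le> rho (idem_of x) (idem_of y)"
    using rho_nonneg idem_of_in_idems by blast
  ultimately have "rho (idem_of x) (idem_of y) = 0" "(\<Sum>j. (1/2) ^ Suc j * P (bs (Suc j)) x y) = 0"
    using assms unfolding d_fun_eq by linarith+
  moreover have "(\<Sum>j. (1/2) ^ Suc j * P (bs (Suc j)) x y) = 0 \<longleftrightarrow> (\<forall>j. P (bs (Suc j)) x y = 0)"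
    by (rule suminf_halves_eq_0_iff) (rule P_bounds)
  ultimately have x: "idem_of x = e" and y: "idem_of y = e" and P: "\<forall>j. P (bs (Suc j)) x y = 0"
    using rho_zero[OF idem_of_in_idems idem_of_in_idems] e_def by auto
  have "mul b x = mul b y" if b: "b \<in> approximants e" for b
  proof -
    obtain n where "n \<ge> 1" "b = bs n"
      using b approximants_subset by blast
    then have "b = bs (Suc (n - 1))"
      by simp
    then have "P b x y = 0"
      using P by simp
    then show ?thesis
      by (rule P_eq_0_imp_mul_eq[OF x y b])
  qed
  moreover have "e \<in> E"
    unfolding e_def by (rule idem_of_in_idems)
  ultimately show ?thesis
    using inverse_limit_preserving_injective[OF inverse_limit updirected_approximants
        is_sup_approximants] in_Grp_idem_of[of x] in_Grp_idem_of[of y] x y by simp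
qed

lemma Metric_space_d: "Metric_space UNIV d"
proof
  fix x y z
  show "0 \<le> d x y" "d x y = d y x" "d x z \<le> d x y + d y z"
    using bounded_pseudometric_d unfolding bounded_pseudometric_def by blast+
  show "d x y = 0 \<longleftrightarrow> x = y"
    using bounded_pseudometric_d d_eq_0_imp_eq unfolding bounded_pseudometric_def by blast
qed

lemma continuous_a_fun_idem_of: "continuous_on UNIV (\<lambda>y. a_fun mul rho b (idem_of y))"
  using idem_of_in_idems by (intro continuous_on_compose2[OF continuous_on_a_fun continuous_idem_of]) auto

lemma continuous_P_term:
  assumes b: "b \<in> B"
  shows "continuous_on UNIV (P_term b k)"
proof -
  let ?g = "\<lambda>y. a_fun mul rho b (idem_of y)"
  let ?h = "\<lambda>y. db b (phihat mul c (idem_of y) b y) (t b (Suc k))"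
  have "continuous_on (G b) (\<lambda>z. db b z (t b (Suc k)))"
  proof (rule compatible_metric_Lipschitz_imp_continuous_on[OF db[OF b], of 1])
    fix x y assume "x \<in> G b" "y \<in> G b"
    then show "\<bar>db b x (t b (Suc k)) - db b y (t b (Suc k))\<bar> \<le> 1 * db b x y"
      using compatible_metric_triangle[OF db[OF b]] compatible_metricD(2)[OF db[OF b]]
        t_in_Grp[OF b] by (smt (verit))
  qed simp
  moreover have "continuous_on {y. 0 < ?g y} (\<lambda>y. mul b y)"
    by (intro continuous_on_mul continuous_on_const continuous_on_id)
  moreover have le: "le b (idem_of y)" if "0 < ?g y" for y
    using a_fun_pos_imp_le[OF idem_of_in_idems that] .
  then have "(\<lambda>y. mul b y) ` {y. 0 < ?g y} \<subseteq> G b"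
    using mul_in_Grp[OF _ _ in_Grp_idem_of] basis_subset b by blast
  ultimately have "continuous_on {y. 0 < ?g y} (\<lambda>y. db b (mul b y) (t b (Suc k)))"
    by (rule continuous_on_compose2)
  moreover have "continuous_on {y. 0 < ?g y} ?h \<longleftrightarrow>
      continuous_on {y. 0 < ?g y} (\<lambda>y. db b (mul b y) (t b (Suc k)))"
    using le by (intro continuous_on_cong) (auto simp: phihat_def)
  ultimately have "continuous_on {y. 0 < ?g y} ?h"
    by blast
  moreover have "\<bar>?h y\<bar> \<le> 1" for y
    using compatible_metricD(1)[OF db[OF b]] db_le_1[OF b] phihat_in_Grp[OF b] t_in_Grp[OF b]
    by (simp add: abs_le_iff)
  ultimately show ?thesis
    unfolding P_term_def[abs_def]
    by (intro continuous_on_mult_vanishing continuous_a_fun_idem_of a_fun_nonneg idem_of_in_idems)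
qed

lemma continuous_P:
  assumes b: "b \<in> B"
  shows "continuous_on UNIV (P b x)"
proof -
  have "continuous_on UNIV (\<lambda>y. \<Sum>k. (1/2) ^ Suc k * \<bar>P_term b k x - P_term b k y\<bar>)"
  proof (rule continuous_on_suminf_halves)
    show "continuous_on UNIV (\<lambda>y. \<bar>P_term b k x - P_term b k y\<bar>)" for k
      by (intro continuous_intros continuous_P_term[OF b])
    show "\<bar>\<bar>P_term b k x - P_term b k y\<bar>\<bar> \<le> 1" for k y
      using P_term_bounds[OF b, of k x] P_term_bounds[OF b, of k y] by linarith
  qed
  moreover have "continuous_on UNIV (\<lambda>y. \<bar>a_fun mul rho b (idem_of x) - a_fun mul rho b (idem_of y)\<bar>)"
    by (intro continuous_intros continuous_a_fun_idem_of)
  ultimately show ?thesis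
    unfolding P_fun_eq by (intro continuous_on_add)
qed

lemma continuous_d: "continuous_on UNIV (d x)"
proof -
  have "continuous_on E (rho (idem_of x))"
    using rho_triangle rho_commute idem_of_in_idems
    by (intro compatible_metric_Lipschitz_imp_continuous_on[OF rho, of 1]) (smt (verit))+
  then have "continuous_on UNIV (\<lambda>y. rho (idem_of x) (idem_of y))"
    using idem_of_in_idems by (intro continuous_on_compose2[OF _ continuous_idem_of]) auto
  moreover have "continuous_on UNIV (\<lambda>y. \<Sum>j. (1/2) ^ Suc j * P (bs (Suc j)) x y)"
  proof (rule continuous_on_suminf_halves)
    show "continuous_on UNIV (P (bs (Suc j)) x)" for j
      by (rule continuous_P) simp
    show "\<bar>P (bs (Suc j)) x y\<bar> \<le> 2" for j y
      using bounded_pseudometric_P[of "bs (Suc j)"] unfolding bounded_pseudometric_def by simp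
  qed
  ultimately show ?thesis
    unfolding d_fun_eq by (intro continuous_on_add)
qed

end

theorem corollary4p16:
  fixes mul :: "'a::t2_space \<Rightarrow> 'a \<Rightarrow> 'a" and iv :: "'a \<Rightarrow> 'a"
    and rho :: "'a \<Rightarrow> 'a \<Rightarrow> real" and bs :: "nat \<Rightarrow> 'a"
    and db :: "'a \<Rightarrow> 'a \<Rightarrow> 'a \<Rightarrow> real" and c :: "'a \<Rightarrow> 'a" and t :: "'a \<Rightarrow> nat \<Rightarrow> 'a"
  assumes S: "topological_clifford_semigroup mul iv" "compact (UNIV :: 'a set)"
    and B1: "perfect_semilattice mul (idems mul)"
            "metrizable_space (subtopology euclidean (idems mul))"
    and B2: "\<And>e. e \<in> idems mul \<Longrightarrow> compact (Grp mul iv e) \<and>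
                 metrizable_space (subtopology euclidean (Grp mul iv e))"
    and B3: "inverse_limit_preserving mul iv"
    and rho: "compatible_metric (idems mul) rho (subtopology euclidean (idems mul))"
             "\<And>x y. x \<in> idems mul \<Longrightarrow> y \<in> idems mul \<Longrightarrow> rho x y \<le> 1"
    and basis: "domain_basis (idems mul) (sle mul) (bs ` {1..})"
    and db: "\<And>b. b \<in> bs ` {1..} \<Longrightarrow>
               compatible_metric (Grp mul iv b) (db b) (subtopology euclidean (Grp mul iv b)) \<and>
               (\<forall>x\<in>Grp mul iv b. \<forall>y\<in>Grp mul iv b. db b x y \<le> 1)"
    and c: "\<And>b. b \<in> bs ` {1..} \<Longrightarrow> c b \<in> Grp mul iv b"
    and t: "\<And>b. b \<in> bs ` {1..} \<Longrightarrow> t b ` {1..} \<subseteq> Grp mul iv b \<and>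
               (subtopology euclidean (Grp mul iv b)) closure_of (t b ` {1..}) = Grp mul iv b"
  shows "Metric_space UNIV (d_fun mul iv rho bs db c t) \<and>
         Metric_space.mtopology UNIV (d_fun mul iv rho bs db c t) = (euclidean :: 'a topology) \<and>
         metrizable_space (euclidean :: 'a topology)"
proof -
  interpret clifford_metric_data mul iv rho bs db c t
    using S(1) B1(1) B3 rho basis db c t by unfold_locales auto
  have "Metric_space.mtopology UNIV (d_fun mul iv rho bs db c t) = euclidean"
    by (rule compact_space_metric_topology_eq[OF Metric_space_d S(2) continuous_d])
  then show ?thesis
    using Metric_space_d Metric_space.metrizable_space_mtopology by metis
qed

end
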